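(* Consider the model in the context, let $0<\alpha<1$, and assume: (i) for every $0<x\le 1$, $\lim_{n\to\infty}P^S_{1,n}(x)=1$ and $\lim_{n\to\infty}P_{1,n}(x)=1$, and $P_{1,n}(x)$ is weakly increasing in $n$ for every $0\le x\le1$; (ii) with $S_m=S\cap\{1,\ldots,m\}$, $|S_m|/m\to c$ in probability as $m\to\infty$ for some constant $c>0$. Then \[ \operatorname*{plim}_{(m,n)\to\infty} q_{\alpha,m,n}(S_m)=\gamma_S, \] i.e. $q_{\alpha,m,n}(S_m)\to\gamma_S$ in probability as $m$ and $n$ tend to infinity jointly (at arbitrary relative rates).
   Context: Model: infinitely many hypotheses indexed by $i\in\mathbb{N}$, a (random) index set $T\subseteq\mathbb{N}$ of true null hypotheses and a (random) infinite subset of interest $S\subseteq\mathbb{N}$. For each sample size $n$, the $p$-values $p_{1,n},p_{2,n},\ldots$ are independent with marginal distribution $P_n(x)=\gamma x+(1-\gamma)P_{1,n}(x)$, $0\le x\le 1$, where $\gamma$ is the proportion of true nulls and $P_{1,n}(x)\ge x$ is a distribution function; conditionally on $i\in S$, $p_{i,n}$ independently has distribution $P^S_n(x)=\gamma_S x+(1-\gamma_S)P^S_{1,n}(x)$ with $\gamma_S\in[0,1]$ the proportion of true nulls within $S$ and $P^S_{1,n}(x)\ge x$ a distribution function; these distributions depend on $n$ but not on $m$. For given $m,n$, using $p_{1,n},\ldots,p_{m,n}$: for $I\subseteq\{1,\ldots,m\}$, $p_{(i:I)}$ is the $i$-th smallest of $\{p_{j,n}:j\in I\}$; Simes test: $I\in\mathcal{U}$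 iff some $1\le i\le|I|$ has $|I|p_{(i:I)}\le i\alpha$; closed testing $\mathcal{X}=\{I: J\in\mathcal{U}\ \forall J\supseteq I, J\subseteq\{1,\ldots,m\}\}$; $t_{\alpha,m,n}(A)=\max\{|I|:I\subseteq A, I\notin\mathcal{X}\}$; $q_{\alpha,m,n}(A)=t_{\alpha,m,n}(A)/|A|$ for $A\neq\emptyset$ and $0$ for $A=\emptyset$. *)

theory Defs
  imports "HOL-Probability.Probability"
begin

text \<open>p-values of a fixed sample size and outcome are given as a vector pv :: nat => real,
  hypotheses are indexed by positive naturals 1, 2, ...\<close>

definition ord_stat :: "(nat \<Rightarrow> real) \<Rightarrow> nat set \<Rightarrow> nat \<Rightarrow> real" where
  "ord_stat pv I i = sort (map pv (sorted_list_of_set I)) ! (i - 1)"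

definition simes_rej :: "real \<Rightarrow> (nat \<Rightarrow> real) \<Rightarrow> nat set \<Rightarrow> bool" where
  "simes_rej \<alpha> pv I \<longleftrightarrow>
     (\<exists>i\<in>{1..card I}. real (card I) * ord_stat pv I i \<le> real i * \<alpha>)"

definition closed_rej :: "real \<Rightarrow> nat \<Rightarrow> (nat \<Rightarrow> real) \<Rightarrow> nat set \<Rightarrow> bool" where
  "closed_rej \<alpha> m pv I \<longleftrightarrow>
     I \<subseteq> {1..m} \<and> (\<forall>J. I \<subseteq> J \<and> J \<subseteq> {1..m} \<longrightarrow> simes_rej \<alpha> pv J)"

definition t_stat :: "real \<Rightarrow> nat \<Rightarrow> (nat \<Rightarrow> real) \<Rightarrow> nat set \<Rightarrow> nat" where
  "t_stat \<alpha> m pv A = Max (card ` {I. I \<subseteq> A \<and> \<not> closed_rej \<alpha> m pv I})"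

definition q_stat :: "real \<Rightarrow> nat \<Rightarrow> (nat \<Rightarrow> real) \<Rightarrow> nat set \<Rightarrow> real" where
  "q_stat \<alpha> m pv A = (if A = {} then 0 else real (t_stat \<alpha> m pv A) / real (card A))"

definition dist_fun_01 :: "(real \<Rightarrow> real) \<Rightarrow> bool" where
  "dist_fun_01 F \<longleftrightarrow> mono_on {0..1} F \<and> (\<forall>x\<in>{0..1}. 0 \<le> F x) \<and> F 1 = 1 \<and>
     (\<forall>x\<in>{0..<1}. continuous (at x within {x..1}) F)"

end

theory Submission
  imports Defs
begin

text \<open>
  Write \<open>K = |S\<^sub>m|\<close> and \<open>N(x) = #{i \<in> S\<^sub>m. p\<^sub>i \<le> x}\<close>. Given \<open>S\<close>, the p-values in \<open>S\<close> are
  conditionally i.i.d. with distribution function \<open>P\<^sup>S\<^sub>n\<close>, so the centred counts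
  \<open>N(x) - P\<^sup>S\<^sub>n(x) K\<close> are sums of uncorrelated bounded terms and Chebyshev's inequality makes
  them \<open>o(m)\<close> uniformly over any fixed finite grid of thresholds; \<open>K\<close> is of order \<open>c m\<close>.
  On this good event two deterministic bounds on the closed-testing bound \<open>t\<close> apply.
  Upper bound: as \<open>P\<^sup>S\<^sub>n(x) \<to> 1 - \<gamma>\<^sub>S\<close> for small \<open>x\<close>, only about \<open>\<gamma>\<^sub>S K\<close> p-values of \<open>S\<^sub>m\<close> exceed
  \<open>x\<close>, so every larger subset contains a fixed fraction of all \<open>m\<close> hypotheses with p-values
  \<open>\<le> x\<close> and is rejected by every Simes test containing it.
  Lower bound: above a small \<open>\<delta>\<close> the p-values of \<open>S\<^sub>m\<close> behave like \<open>\<gamma>\<^sub>S K\<close> uniform ones, and the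
  set of those exceeding \<open>\<delta>\<close> has size about \<open>\<gamma>\<^sub>S K\<close> and passes its own Simes test.
\<close>

section \<open>The Simes test and the closed-testing bound\<close>

lemma sorted_nth_le_iff:
  fixes xs :: "'a::linorder list"
  assumes "sorted xs" "k < length xs"
  shows "xs ! k \<le> y \<longleftrightarrow> k < length (filter (\<lambda>v. v \<le> y) xs)"
proof
  assume "xs ! k \<le> y"
  then have "{0..k} \<subseteq> {i. i < length xs \<and> xs ! i \<le> y}"
    using assms by (auto intro: order_trans[OF sorted_nth_mono[OF assms(1)]])
  then have "card {0..k} \<le> card {i. i < length xs \<and> xs ! i \<le> y}"
    by (intro card_mono) auto
  then show "k < length (filter (\<lambda>v. v \<le> y) xs)" by (simp add: length_filter_conv_card)
next
  assume k: "k < length (filter (\<lambda>v. v \<le> y) xs)"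
  show "xs ! k \<le> y"
  proof (rule ccontr)
    assume "\<not> xs ! k \<le> y"
    then have "{i. i < length xs \<and> xs ! i \<le> y} \<subseteq> {0..<k}"
      using assms by (auto simp: not_le) (metis le_less_trans not_le sorted_nth_mono)
    then have "card {i. i < length xs \<and> xs ! i \<le> y} \<le> k"
      by (metis card_atLeastLessThan card_mono finite_atLeastLessThan minus_nat.diff_0)
    then show False using k by (simp add: length_filter_conv_card)
  qed
qed

lemma ord_stat_le_iff:
  assumes "finite J" "1 \<le> i" "i \<le> card J"
  shows "ord_stat pv J i \<le> y \<longleftrightarrow> i \<le> card {j\<in>J. pv j \<le> y}"
proof -
  define xs where "xs = sort (map pv (sorted_list_of_set J))"
  have xs: "sorted xs" "length xs = card J" using assms by (auto simp: xs_def)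
  have "length (filter (\<lambda>v. v \<le> y) xs)
      = length (filter (\<lambda>v. v \<le> y) (map pv (sorted_list_of_set J)))"
    unfolding xs_def by (metis mset_filter mset_sort size_mset)
  also have "\<dots> = length (filter (\<lambda>j. pv j \<le> y) (sorted_list_of_set J))"
    by (simp add: filter_map comp_def)
  also have "\<dots> = card {j\<in>J. pv j \<le> y}"
    using assms by (subst distinct_length_filter) (auto intro: arg_cong[where f=card])
  finally have "length (filter (\<lambda>v. v \<le> y) xs) = card {j\<in>J. pv j \<le> y}" .
  moreover have "ord_stat pv J i = xs ! (i - 1)" by (simp add: ord_stat_def xs_def)
  ultimately show ?thesis using sorted_nth_le_iff[OF xs(1), of "i - 1" y] xs(2) assms by auto
qed

lemma simes_rejI:
  assumes "finite J" "1 \<le> card {j\<in>J. pv j \<le> x}"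
    and "real (card J) * x \<le> real (card {j\<in>J. pv j \<le> x}) * \<alpha>"
  shows "simes_rej \<alpha> pv J"
proof -
  let ?N = "card {j\<in>J. pv j \<le> x}"
  have N: "?N \<le> card J" using assms by (intro card_mono) auto
  have "ord_stat pv J ?N \<le> x" using ord_stat_le_iff[OF assms(1,2) N] by simp
  then have "real (card J) * ord_stat pv J ?N \<le> real (card J) * x"
    by (intro mult_left_mono) auto
  also have "\<dots> \<le> real ?N * \<alpha>" by (rule assms(3))
  finally show ?thesis unfolding simes_rej_def using N assms(2) by auto
qed

lemma not_simes_rejI:
  assumes "finite J" "0 < \<alpha>"
    and "\<And>y. 0 < y \<Longrightarrow> y \<le> \<alpha> \<Longrightarrow> real (card {j\<in>J. pv j \<le> y}) < y * real (card J) / \<alpha>"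
  shows "\<not> simes_rej \<alpha> pv J"
proof
  assume "simes_rej \<alpha> pv J"
  then obtain i where i: "i \<in> {1..card J}" "real (card J) * ord_stat pv J i \<le> real i * \<alpha>"
    unfolding simes_rej_def by auto
  have J: "0 < real (card J)" using i by auto
  define y where "y = real i * \<alpha> / real (card J)"
  have "ord_stat pv J i \<le> y" using i J by (simp add: y_def field_simps)
  then have "i \<le> card {j\<in>J. pv j \<le> y}" using ord_stat_le_iff[OF assms(1)] i by auto
  moreover have "0 < y" "y \<le> \<alpha>" using i J assms(2) by (auto simp: y_def field_simps)
  then have "real (card {j\<in>J. pv j \<le> y}) < real i"
    using assms(3)[of y] J assms(2) by (simp add: y_def)
  ultimately show False by simp
qed

lemma finite_not_closed_rej_subsets:
  "finite A \<Longrightarrow> finite {I. I \<subseteq> A \<and> \<not> closed_rej \<alpha> m pv I}"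
  by (rule finite_subset[of _ "Pow A"]) auto

lemma not_closed_rej_empty: "\<not> closed_rej \<alpha> m pv {}"
  unfolding closed_rej_def simes_rej_def by auto

lemma t_stat_leI:
  assumes "finite A" "\<And>I. I \<subseteq> A \<Longrightarrow> b < real (card I) \<Longrightarrow> closed_rej \<alpha> m pv I"
  shows "real (t_stat \<alpha> m pv A) \<le> b"
proof -
  let ?C = "{I. I \<subseteq> A \<and> \<not> closed_rej \<alpha> m pv I}"
  have "t_stat \<alpha> m pv A \<in> card ` ?C" unfolding t_stat_def
    using not_closed_rej_empty finite_not_closed_rej_subsets[OF assms(1)] by (intro Max_in) auto
  then obtain I where "I \<subseteq> A" "\<not> closed_rej \<alpha> m pv I" "t_stat \<alpha> m pv A = card I" by blast
  then show ?thesis using assms(2) not_less by metis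
qed

lemma card_le_t_stat:
  assumes "finite A" "J \<subseteq> A" "J \<subseteq> {1..m}" "\<not> simes_rej \<alpha> pv J"
  shows "card J \<le> t_stat \<alpha> m pv A"
proof -
  have "\<not> closed_rej \<alpha> m pv J" using assms unfolding closed_rej_def by blast
  then show ?thesis unfolding t_stat_def
    using assms finite_not_closed_rej_subsets[OF assms(1)] by (intro Max_ge) auto
qed

lemma card_filter_not:
  assumes "finite A"
  shows "real (card {i\<in>A. \<not> P i}) = real (card A) - real (card {i\<in>A. P i})"
proof -
  have "card A = card {i\<in>A. P i} + card {i\<in>A. \<not> P i}"
    using assms by (subst card_Un_disjoint[symmetric]) (auto intro: arg_cong[where f=card])
  then show ?thesis by simp
qed

text \<open>A subset of \<open>A\<close> with more than \<open>b\<close> elements contains more than \<open>\<kappa> m\<close> p-values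
  \<open>\<le> x\<close>, and every \<open>J \<subseteq> {1..m}\<close> containing it has \<open>|J| x \<le> m \<kappa> \<alpha>\<close>, so the Simes test of
  \<open>J\<close> rejects at the order statistic counting the p-values \<open>\<le> x\<close>.\<close>
lemma t_stat_le_of_few_large:
  assumes A: "finite A" "A \<subseteq> {1..m}" and \<alpha>: "0 < \<alpha>"
    and \<kappa>: "0 < \<kappa>" and x: "0 \<le> x" "x \<le> \<kappa> * \<alpha>"
    and few: "real (card {i\<in>A. x < pv i}) + \<kappa> * real m \<le> b"
  shows "real (t_stat \<alpha> m pv A) \<le> b"
proof (rule t_stat_leI[OF A(1)])
  fix I assume IA: "I \<subseteq> A" and Ib: "b < real (card I)"
  have "finite I" using A(1) IA by (rule rev_finite_subset)
  moreover have "card {i\<in>I. x < pv i} \<le> card {i\<in>A. x < pv i}"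
    using IA A(1) by (intro card_mono) auto
  ultimately have small: "\<kappa> * real m < real (card {i\<in>I. pv i \<le> x})"
    using card_filter_not[of I "\<lambda>i. pv i \<le> x"] few Ib by (simp add: not_le)
  show "closed_rej \<alpha> m pv I" unfolding closed_rej_def
  proof (intro conjI allI impI)
    show "I \<subseteq> {1..m}" using IA A(2) by auto
    fix J assume J: "I \<subseteq> J \<and> J \<subseteq> {1..m}"
    then have "finite J" by (meson finite_atLeastAtMost rev_finite_subset)
    have "card {i\<in>I. pv i \<le> x} \<le> card {j\<in>J. pv j \<le> x}"
      using J \<open>finite J\<close> by (intro card_mono) auto
    then have many: "\<kappa> * real m < real (card {j\<in>J. pv j \<le> x})" using small by linarith
    have "card J \<le> m" using J card_mono[of "{1..m}" J] by auto
    then have "real (card J) * x \<le> real m * (\<kappa> * \<alpha>)"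
      using x \<kappa> \<alpha> by (intro mult_mono) auto
    also have "\<dots> \<le> real (card {j\<in>J. pv j \<le> x}) * \<alpha>"
      using many \<alpha> by (simp add: mult.assoc[symmetric] mult.commute[of _ \<kappa>])
    finally have "real (card J) * x \<le> real (card {j\<in>J. pv j \<le> x}) * \<alpha>" .
    moreover have "0 < real (card {j\<in>J. pv j \<le> x})"
      using many \<kappa> zero_le_mult_iff[of \<kappa> "real m"] by linarith
    then have "1 \<le> card {j\<in>J. pv j \<le> x}" by simp
    ultimately show "simes_rej \<alpha> pv J" using \<open>finite J\<close> by (intro simes_rejI)
  qed
qed

lemma card_le_t_stat_of_simes_margin:
  assumes A: "finite A" "A \<subseteq> {1..m}" and \<alpha>: "0 < \<alpha>" and \<delta>: "0 \<le> \<delta>"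
    and margin: "\<And>y. \<delta> \<le> y \<Longrightarrow> y \<le> \<alpha> \<Longrightarrow>
      real (card {i\<in>A. \<delta> < pv i \<and> pv i \<le> y}) < y * real (card {i\<in>A. \<delta> < pv i}) / \<alpha>"
  shows "card {i\<in>A. \<delta> < pv i} \<le> t_stat \<alpha> m pv A"
proof (rule card_le_t_stat[OF A(1)])
  let ?J = "{i\<in>A. \<delta> < pv i}"
  show "?J \<subseteq> A" "?J \<subseteq> {1..m}" using A by auto
  show "\<not> simes_rej \<alpha> pv ?J"
  proof (cases "?J = {}")
    case False
    show ?thesis
    proof (rule not_simes_rejI)
      fix y assume y: "0 < y" "y \<le> \<alpha>"
      show "real (card {j\<in>?J. pv j \<le> y}) < y * real (card ?J) / \<alpha>"
      proof (cases "\<delta> \<le> y")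
        case True
        then show ?thesis using margin[of y] y by (simp add: conj_assoc)
      next
        case False
        then have "{j\<in>?J. pv j \<le> y} = {}" by auto
        then have "card {j\<in>?J. pv j \<le> y} = 0" by (simp only: card.empty)
        moreover have "0 < y * real (card ?J) / \<alpha>"
          using y \<alpha> A(1) \<open>?J \<noteq> {}\<close> by (simp add: card_gt_0_iff)
        ultimately show ?thesis by linarith
      qed
    qed (use A \<alpha> in auto)
  next
    case True
    then show ?thesis by (simp only: simes_rej_def card.empty) simp
  qed
qed

lemma count_between_lt_of_tracking:
  fixes pv :: "nat \<Rightarrow> real" and A :: "nat set" and F :: "real \<Rightarrow> real"
  defines "N x \<equiv> real (card {i\<in>A. pv i \<le> x})"
  assumes A: "finite A" and \<delta>: "0 < \<delta>" "\<delta> \<le> y" and \<gamma>: "0 \<le> \<gamma>"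
    and g: "y \<le> g" "g \<le> y + \<delta>/2"
    and track: "\<bar>N g - F g * real (card A)\<bar> < \<rho>" "\<bar>N \<delta> - F \<delta> * real (card A)\<bar> < \<rho>"
    and slope: "F g - F \<delta> \<le> \<gamma> * (g - \<delta>) + \<gamma> * \<delta> / 8"
    and \<rho>: "\<rho> \<le> \<gamma> * \<delta> * real (card A) / 8"
  shows "real (card {i\<in>A. \<delta> < pv i \<and> pv i \<le> y}) < \<gamma> * y * real (card A) - \<rho>"
proof -
  let ?K = "real (card A)"
  have "{i\<in>A. pv i \<le> g} = {i\<in>A. \<delta> < pv i \<and> pv i \<le> g} \<union> {i\<in>A. pv i \<le> \<delta>}"
    using g \<delta> by auto
  then have "N g = real (card ({i\<in>A. \<delta> < pv i \<and> pv i \<le> g} \<union> {i\<in>A. pv i \<le> \<delta>}))"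
    by (simp add: N_def)
  also have "\<dots> = real (card {i\<in>A. \<delta> < pv i \<and> pv i \<le> g}) + N \<delta>"
    unfolding N_def using A by (subst card_Un_disjoint) auto
  finally have "N g = real (card {i\<in>A. \<delta> < pv i \<and> pv i \<le> g}) + N \<delta>" .
  moreover have "card {i\<in>A. \<delta> < pv i \<and> pv i \<le> y} \<le> card {i\<in>A. \<delta> < pv i \<and> pv i \<le> g}"
    using A g by (intro card_mono) auto
  ultimately have "real (card {i\<in>A. \<delta> < pv i \<and> pv i \<le> y}) \<le> N g - N \<delta>" by simp
  also have "\<dots> < (F g - F \<delta>) * ?K + 2 * \<rho>"
    using track by (simp add: algebra_simps abs_less_iff)
  also have "\<dots> \<le> (\<gamma> * (y - \<delta>/2) + \<gamma> * \<delta> / 8) * ?K + 2 * \<rho>"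
  proof -
    have "\<gamma> * (g - \<delta>) \<le> \<gamma> * (y - \<delta>/2)" using g \<gamma> by (intro mult_left_mono) auto
    then show ?thesis using slope by (intro add_right_mono mult_right_mono) auto
  qed
  also have "\<dots> \<le> \<gamma> * y * ?K - \<rho>" using \<rho> by (simp add: algebra_simps)
  finally show ?thesis .
qed

text \<open>If on a \<open>\<delta>/2\<close>-dense grid the counts track \<open>F \<cdot> |A|\<close> and \<open>F\<close> grows with slope at
  most \<open>\<gamma>\<close> above \<open>\<delta>\<close>, the p-values of \<open>A\<close> above \<open>\<delta>\<close> stay below the Simes line with a margin
  of order \<open>\<gamma> \<delta> |A|\<close>, which absorbs the tracking error \<open>\<rho>\<close>.\<close>
lemma t_stat_gt_of_tracking:
  fixes pv :: "nat \<Rightarrow> real" and A :: "nat set" and F :: "real \<Rightarrow> real"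
  defines "N x \<equiv> real (card {i\<in>A. pv i \<le> x})"
  assumes A: "finite A" "A \<subseteq> {1..m}" and \<alpha>: "0 < \<alpha>"
    and \<delta>: "0 < \<delta>" "\<delta> \<le> 1 - \<alpha>" and \<gamma>: "0 \<le> \<gamma>"
    and dense: "\<And>y. \<delta> \<le> y \<Longrightarrow> y \<le> \<alpha> \<Longrightarrow> \<exists>g\<in>Gr. y \<le> g \<and> g \<le> y + \<delta>/2"
    and \<delta>_Gr: "\<delta> \<in> Gr"
    and track: "\<And>g. g \<in> Gr \<Longrightarrow> \<bar>N g - F g * real (card A)\<bar> < \<rho>"
    and slope: "\<And>g. g \<in> Gr \<Longrightarrow> \<delta> \<le> g \<Longrightarrow> F g - F \<delta> \<le> \<gamma> * (g - \<delta>) + \<gamma> * \<delta> / 8"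
    and tail: "\<gamma> * (1 - \<delta>) \<le> 1 - F \<delta>"
    and \<rho>: "\<rho> \<le> \<gamma> * \<delta> * real (card A) / 8"
  shows "\<gamma> * (1 - \<delta>) * real (card A) - \<rho> < real (t_stat \<alpha> m pv A)"
proof -
  let ?K = "real (card A)"
  let ?J = "{i\<in>A. \<delta> < pv i}"
  have J: "real (card ?J) = ?K - N \<delta>"
    using card_filter_not[OF A(1), of "\<lambda>i. pv i \<le> \<delta>"] by (simp add: N_def not_le)
  have "\<gamma> * (1 - \<delta>) * ?K \<le> (1 - F \<delta>) * ?K" using tail by (intro mult_right_mono) auto
  then have J_large: "\<gamma> * (1 - \<delta>) * ?K - \<rho> < real (card ?J)"
    using track[OF \<delta>_Gr] J by (simp add: algebra_simps abs_less_iff)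
  have "card ?J \<le> t_stat \<alpha> m pv A"
  proof (rule card_le_t_stat_of_simes_margin[OF A \<alpha>])
    fix y assume y: "\<delta> \<le> y" "y \<le> \<alpha>"
    obtain g where g: "g \<in> Gr" "y \<le> g" "g \<le> y + \<delta>/2" using dense[OF y] by blast
    have "real (card {i\<in>A. \<delta> < pv i \<and> pv i \<le> y}) < \<gamma> * y * ?K - \<rho>"
      using A(1) \<delta>(1) y(1) \<gamma> g track[OF g(1)] track[OF \<delta>_Gr] slope[OF g(1)] \<rho>
      unfolding N_def by (intro count_between_lt_of_tracking[where F = F]) auto
    also have "\<dots> \<le> y * (\<gamma> * (1 - \<delta>) * ?K - \<rho>) / \<alpha>"
    proof -
      have "y \<le> y / \<alpha> * (1 - \<delta>)"
        using y \<delta> \<alpha> mult_right_mono[of "\<alpha> + \<delta>" 1 y] by (simp add: field_simps)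
      then have "y * (\<gamma> * ?K) \<le> (y / \<alpha> * (1 - \<delta>)) * (\<gamma> * ?K)"
        using \<gamma> by (intro mult_right_mono) auto
      then have "\<gamma> * y * ?K \<le> y / \<alpha> * (\<gamma> * (1 - \<delta>) * ?K)" by (simp add: mult_ac)
      moreover have "y / \<alpha> * \<rho> \<le> \<rho>"
        using y \<delta> \<alpha> track[OF \<delta>_Gr] by (intro mult_left_le_one_le) auto
      ultimately show ?thesis by (simp add: right_diff_distrib diff_divide_distrib)
    qed
    also have "\<dots> \<le> y * real (card ?J) / \<alpha>"
      using J_large y \<delta> \<alpha> by (intro divide_right_mono mult_left_mono) auto
    finally show "real (card {i\<in>A. \<delta> < pv i \<and> pv i \<le> y}) < y * real (card ?J) / \<alpha>" .
  qed (use \<delta> in simp)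
  then show ?thesis using J_large by linarith
qed

lemma half_step_grid_exists:
  fixes \<delta> :: real
  assumes "0 < \<delta>" "\<delta> \<le> 1"
  obtains Gr where "finite Gr" "Gr \<subseteq> {0..1}" "\<delta> \<in> Gr"
    "\<And>y. \<delta> \<le> y \<Longrightarrow> y \<le> 1 - \<delta>/2 \<Longrightarrow> \<exists>g\<in>Gr. y \<le> g \<and> g \<le> y + \<delta>/2"
proof
  let ?L = "nat \<lceil>2 * (1 - \<delta>) / \<delta>\<rceil>"
  let ?Gr = "{g \<in> (\<lambda>k. \<delta> + real k * (\<delta>/2)) ` {..?L}. g \<le> 1}"
  show "finite ?Gr" by simp
  show "?Gr \<subseteq> {0..1}" "\<delta> \<in> ?Gr" using assms by (auto intro!: image_eqI[of _ _ 0])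
  fix y assume y: "\<delta> \<le> y" "y \<le> 1 - \<delta>/2"
  define k where "k = nat \<lceil>2 * (y - \<delta>) / \<delta>\<rceil>"
  have "0 \<le> 2 * (y - \<delta>) / \<delta>" using assms y by simp
  then have "2 * (y - \<delta>) / \<delta> \<le> real k" "real k < 2 * (y - \<delta>) / \<delta> + 1" unfolding k_def by linarith+
  then have "y \<le> \<delta> + real k * (\<delta>/2)" "\<delta> + real k * (\<delta>/2) < y + \<delta>/2"
    using assms(1) by (simp_all add: field_simps)
  moreover have "k \<le> ?L"
    unfolding k_def using assms y by (intro nat_mono ceiling_mono divide_right_mono) auto
  ultimately show "\<exists>g\<in>?Gr. y \<le> g \<and> g \<le> y + \<delta>/2" using y by (intro bexI[of _ "\<delta> + real k * (\<delta>/2)"]) auto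
qed

section \<open>Concentration of the counts on the selected set\<close>

lemma (in prob_space) prob_abs_sum_ge_le_card:
  fixes Y :: "'i \<Rightarrow> 'a \<Rightarrow> real"
  assumes I: "finite I"
    and meas: "\<And>i. i \<in> I \<Longrightarrow> Y i \<in> borel_measurable M"
    and bounded: "\<And>i \<omega>. i \<in> I \<Longrightarrow> \<omega> \<in> space M \<Longrightarrow> \<bar>Y i \<omega>\<bar> \<le> 1"
    and uncorrelated: "\<And>i j. i \<in> I \<Longrightarrow> j \<in> I \<Longrightarrow> i \<noteq> j \<Longrightarrow> expectation (\<lambda>\<omega>. Y i \<omega> * Y j \<omega>) = 0"
    and a: "0 < a"
  shows "prob {\<omega>\<in>space M. a \<le> \<bar>\<Sum>i\<in>I. Y i \<omega>\<bar>} \<le> real (card I) / a\<^sup>2"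
proof -
  have prod_le: "\<bar>Y i \<omega> * Y j \<omega>\<bar> \<le> 1" if "i \<in> I" "j \<in> I" "\<omega> \<in> space M" for i j \<omega>
    unfolding abs_mult using bounded that by (intro mult_le_one) auto
  have int: "integrable M (\<lambda>\<omega>. Y i \<omega> * Y j \<omega>)" if "i \<in> I" "j \<in> I" for i j
    using prod_le that meas by (intro integrable_const_bound[where B=1]) auto
  have square: "(\<Sum>i\<in>I. Y i \<omega>)\<^sup>2 = (\<Sum>i\<in>I. \<Sum>j\<in>I. Y i \<omega> * Y j \<omega>)" for \<omega>
    by (simp add: power2_eq_square sum_product)
  have "expectation (\<lambda>\<omega>. (\<Sum>i\<in>I. Y i \<omega>)\<^sup>2) = (\<Sum>i\<in>I. \<Sum>j\<in>I. expectation (\<lambda>\<omega>. Y i \<omega> * Y j \<omega>))"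
    unfolding square using int by (simp add: Bochner_Integration.integral_sum Bochner_Integration.integrable_sum)
  also have "\<dots> = (\<Sum>i\<in>I. expectation (\<lambda>\<omega>. Y i \<omega> * Y i \<omega>))"
    using I uncorrelated by (intro sum.cong refl) (auto simp: sum.remove intro!: sum.neutral)
  also have "\<dots> \<le> (\<Sum>i\<in>I. 1)"
    using prod_le int by (intro sum_mono integral_le_const) (auto simp: abs_le_iff)
  finally have "expectation (\<lambda>\<omega>. (\<Sum>i\<in>I. Y i \<omega>)\<^sup>2) \<le> real (card I)" by simp
  moreover have "integrable M (\<lambda>\<omega>. (\<Sum>i\<in>I. Y i \<omega>)\<^sup>2)"
    unfolding square using int by (intro Bochner_Integration.integrable_sum) auto
  ultimately show ?thesis
    using second_moment_method[of "\<lambda>\<omega>. \<Sum>i\<in>I. Y i \<omega>" a] meas a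
    by (force intro: order_trans divide_right_mono)
qed

locale selection_model = prob_space M for M :: "'a measure" +
  fixes p :: "nat \<Rightarrow> 'a \<Rightarrow> real" and S :: "'a \<Rightarrow> nat set" and G :: "real \<Rightarrow> real"
  assumes p_rv: "\<And>i. 1 \<le> i \<Longrightarrow> p i \<in> borel_measurable M"
    and p_range: "\<And>i \<omega>. 1 \<le> i \<Longrightarrow> \<omega> \<in> space M \<Longrightarrow> p i \<omega> \<in> {0..1}"
    and S_meas: "\<And>i. {\<omega> \<in> space M. i \<in> S \<omega>} \<in> sets M"
    and law_on_S: "\<And>I x. finite I \<Longrightarrow> I \<subseteq> {1..} \<Longrightarrow> (\<forall>i\<in>I. x i \<in> {0..1}) \<Longrightarrow>
        prob {\<omega> \<in> space M. I \<subseteq> S \<omega> \<and> (\<forall>i\<in>I. p i \<omega> \<le> x i)}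
        = prob {\<omega> \<in> space M. I \<subseteq> S \<omega>} * (\<Prod>i\<in>I. G (x i))"
    and G_range: "\<And>x. x \<in> {0..1} \<Longrightarrow> G x \<in> {0..1}"
    and G_one: "G 1 = 1"
begin

definition selected :: "nat \<Rightarrow> 'a set" where
  "selected i = {\<omega>\<in>space M. i \<in> S \<omega>}"

definition selected_le :: "real \<Rightarrow> nat \<Rightarrow> 'a set" where
  "selected_le x i = {\<omega>\<in>space M. i \<in> S \<omega> \<and> p i \<omega> \<le> x}"

definition centred :: "real \<Rightarrow> nat \<Rightarrow> 'a \<Rightarrow> real" where
  "centred x i \<omega> = indicator (selected_le x i) \<omega> - G x * indicator (selected i) \<omega>"

lemma selected_sets [measurable]: "selected i \<in> sets M"
  using S_meas by (simp add: selected_def)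

lemma selected_le_sets [measurable]:
  assumes "1 \<le> i" shows "selected_le x i \<in> sets M"
proof -
  have [measurable]: "p i \<in> borel_measurable M" using p_rv assms .
  have "selected_le x i = selected i \<inter> {\<omega>\<in>space M. p i \<omega> \<le> x}"
    by (auto simp: selected_le_def selected_def)
  also have "\<dots> \<in> sets M" by measurable
  finally show ?thesis .
qed

lemma selected_le_one: "1 \<le> i \<Longrightarrow> selected_le 1 i = selected i"
  using p_range by (auto simp: selected_le_def selected_def)

lemma prob_selected_le_pair:
  assumes ij: "1 \<le> i" "1 \<le> j" "i \<noteq> j" and xy: "x \<in> {0..1}" "y \<in> {0..1}"
  shows "prob (selected_le x i \<inter> selected_le y j) = prob (selected i \<inter> selected j) * (G x * G y)"
proof -
  define z where "z k = (if k = i then x else y)" for k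
  have "selected_le x i \<inter> selected_le y j
      = {\<omega> \<in> space M. {i, j} \<subseteq> S \<omega> \<and> (\<forall>k\<in>{i, j}. p k \<omega> \<le> z k)}"
    using ij by (auto simp: selected_le_def z_def)
  moreover have "selected i \<inter> selected j = {\<omega> \<in> space M. {i, j} \<subseteq> S \<omega>}"
    by (auto simp: selected_def)
  ultimately show ?thesis using law_on_S[of "{i, j}" z] ij xy by (simp add: z_def)
qed

lemma centred_measurable: "1 \<le> i \<Longrightarrow> centred x i \<in> borel_measurable M"
  unfolding centred_def[abs_def] by measurable

lemma centred_bounded: "x \<in> {0..1} \<Longrightarrow> \<bar>centred x i \<omega>\<bar> \<le> 1"
  using G_range[of x] by (auto simp: centred_def indicator_def selected_le_def selected_def)

text \<open>Uncorrelatedness of the centred indicators is where the product form of the conditional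
  law on \<open>S\<close> enters: each term of the expanded product has expectation
  \<open>\<plusminus>G(x)\<^sup>2 P(i, j \<in> S)\<close>.\<close>
lemma centred_uncorrelated:
  assumes ij: "1 \<le> i" "1 \<le> j" "i \<noteq> j" and x: "x \<in> {0..1}"
  shows "expectation (\<lambda>\<omega>. centred x i \<omega> * centred x j \<omega>) = 0"
proof -
  have [measurable]: "selected_le y i \<in> sets M" "selected_le y j \<in> sets M" for y
    using ij by (auto intro: selected_le_sets)
  have "centred x i \<omega> * centred x j \<omega> = indicator (selected_le x i \<inter> selected_le x j) \<omega>
      - G x * indicator (selected_le x i \<inter> selected_le 1 j) \<omega>
      - G x * indicator (selected_le 1 i \<inter> selected_le x j) \<omega>
      + G x * G x * indicator (selected i \<inter> selected j) \<omega>" for \<omega>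
    using ij unfolding centred_def indicator_inter_arith by (simp add: selected_le_one algebra_simps)
  then have "expectation (\<lambda>\<omega>. centred x i \<omega> * centred x j \<omega>)
      = prob (selected_le x i \<inter> selected_le x j)
      - G x * prob (selected_le x i \<inter> selected_le 1 j)
      - G x * prob (selected_le 1 i \<inter> selected_le x j)
      + G x * G x * prob (selected i \<inter> selected j)"
    using ij by (simp add: integrable_real_indicator emeasure_eq_measure)
  also have "\<dots> = 0"
    using prob_selected_le_pair[OF ij] x G_one by (simp add: algebra_simps)
  finally show ?thesis .
qed

lemma sum_indicator_selected:
  assumes "\<omega> \<in> space M"
  shows "(\<Sum>i\<in>{1..m}. indicator (selected_le x i) \<omega>) = real (card {i\<in>S \<omega> \<inter> {1..m}. p i \<omega> \<le> x})"
    and "(\<Sum>i\<in>{1..m}. indicator (selected i) \<omega>) = real (card (S \<omega> \<inter> {1..m}))"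
proof -
  have count: "(\<Sum>i\<in>{1..m}. indicator T i :: real) = real (card (T \<inter> {1..m}))" for T
    unfolding indicator_def by (simp add: sum.If_cases Int_def conj_commute)
  have ind: "indicator (selected_le x i) \<omega> = indicator {i\<in>S \<omega>. p i \<omega> \<le> x} i"
    "indicator (selected i) \<omega> = indicator (S \<omega>) i" for i
    using assms by (simp_all add: indicator_def selected_le_def selected_def)
  have cap: "{i\<in>S \<omega>. p i \<omega> \<le> x} \<inter> {1..m} = {i\<in>S \<omega> \<inter> {1..m}. p i \<omega> \<le> x}" by auto
  show "(\<Sum>i\<in>{1..m}. indicator (selected_le x i) \<omega>) = real (card {i\<in>S \<omega> \<inter> {1..m}. p i \<omega> \<le> x})"
    and "(\<Sum>i\<in>{1..m}. indicator (selected i) \<omega>) = real (card (S \<omega> \<inter> {1..m}))"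
    by (simp_all only: ind count cap)
qed

lemma card_selected_measurable:
  "(\<lambda>\<omega>. real (card (S \<omega> \<inter> {1..m}))) \<in> borel_measurable M"
proof -
  have "(\<lambda>\<omega>. \<Sum>i\<in>{1..m}. indicator (selected i) \<omega> :: real) \<in> borel_measurable M"
    by (intro borel_measurable_sum borel_measurable_indicator selected_sets)
  then show ?thesis by (rule measurable_cong[THEN iffD1, rotated]) (metis sum_indicator_selected(2))
qed

lemma sum_centred:
  "\<omega> \<in> space M \<Longrightarrow> (\<Sum>i\<in>{1..m}. centred x i \<omega>)
    = real (card {i\<in>S \<omega> \<inter> {1..m}. p i \<omega> \<le> x}) - G x * real (card (S \<omega> \<inter> {1..m}))"
  unfolding centred_def sum_subtractf sum_distrib_left[symmetric] by (simp only: sum_indicator_selected)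

lemma count_deviation_bound:
  assumes x: "x \<in> {0..1}" and \<eta>: "0 < \<eta>" and m: "1 \<le> m"
  defines "E \<equiv> {\<omega>\<in>space M. \<eta> * real m \<le>
    \<bar>real (card {i\<in>S \<omega> \<inter> {1..m}. p i \<omega> \<le> x}) - G x * real (card (S \<omega> \<inter> {1..m}))\<bar>}"
  shows "E \<in> events" and "prob E \<le> 1 / (\<eta>\<^sup>2 * real m)"
proof -
  have E: "E = {\<omega>\<in>space M. \<eta> * real m \<le> \<bar>\<Sum>i\<in>{1..m}. centred x i \<omega>\<bar>}"
    unfolding E_def by (rule Collect_cong, intro conj_cong refl) (simp only: sum_centred)
  have [measurable]: "(\<lambda>\<omega>. \<Sum>i\<in>{1..m}. centred x i \<omega>) \<in> borel_measurable M"
    by (intro borel_measurable_sum centred_measurable) auto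
  show "E \<in> events" unfolding E by measurable
  have "prob E \<le> real (card {1..m}) / (\<eta> * real m)\<^sup>2"
    unfolding E using x \<eta> m
    by (intro prob_abs_sum_ge_le_card centred_measurable centred_bounded centred_uncorrelated) auto
  also have "\<dots> = 1 / (\<eta>\<^sup>2 * real m)" using m by (simp add: power2_eq_square)
  finally show "prob E \<le> 1 / (\<eta>\<^sup>2 * real m)" .
qed

end

section \<open>Consistency of the estimate\<close>

locale selection_asymptotics = prob_space M for M :: "'a measure" +
  fixes p :: "nat \<Rightarrow> nat \<Rightarrow> 'a \<Rightarrow> real" and S :: "'a \<Rightarrow> nat set"
    and \<gamma>S \<alpha> c :: real and PS1 :: "nat \<Rightarrow> real \<Rightarrow> real"
  assumes alpha: "0 < \<alpha>" "\<alpha> < 1"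
    and gamma_S: "0 \<le> \<gamma>S" "\<gamma>S \<le> 1"
    and PS1_df: "\<And>n. dist_fun_01 (PS1 n)" "\<And>n x. x \<in> {0..1} \<Longrightarrow> x \<le> PS1 n x"
    and p_rv: "\<And>i n. 1 \<le> i \<Longrightarrow> p i n \<in> borel_measurable M"
    and p_range: "\<And>i n \<omega>. 1 \<le> i \<Longrightarrow> \<omega> \<in> space M \<Longrightarrow> p i n \<omega> \<in> {0..1}"
    and S_meas: "\<And>i. {\<omega> \<in> space M. i \<in> S \<omega>} \<in> sets M"
    and law_on_S: "\<And>n I x. finite I \<Longrightarrow> I \<subseteq> {1..} \<Longrightarrow> (\<forall>i\<in>I. x i \<in> {0..1}) \<Longrightarrow>
        prob {\<omega> \<in> space M. I \<subseteq> S \<omega> \<and> (\<forall>i\<in>I. p i n \<omega> \<le> x i)}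
        = prob {\<omega> \<in> space M. I \<subseteq> S \<omega>} * (\<Prod>i\<in>I. \<gamma>S * x i + (1 - \<gamma>S) * PS1 n (x i))"
    and lim_PS1: "\<And>x. x \<in> {0<..1} \<Longrightarrow> (\<lambda>n. PS1 n x) \<longlonglongrightarrow> 1"
    and c_pos: "0 < c"
    and S_ratio: "\<And>\<epsilon>. 0 < \<epsilon> \<Longrightarrow>
        (\<lambda>m. prob {\<omega> \<in> space M. \<epsilon> < \<bar>real (card (S \<omega> \<inter> {1..m})) / real m - c\<bar>}) \<longlonglongrightarrow> 0"
begin

definition PS :: "nat \<Rightarrow> real \<Rightarrow> real" where
  "PS n x = \<gamma>S * x + (1 - \<gamma>S) * PS1 n x"

definition card_S :: "nat \<Rightarrow> 'a \<Rightarrow> real" where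
  "card_S m \<omega> = real (card (S \<omega> \<inter> {1..m}))"

definition count_le :: "nat \<Rightarrow> nat \<Rightarrow> real \<Rightarrow> 'a \<Rightarrow> real" where
  "count_le n m x \<omega> = real (card {i\<in>S \<omega> \<inter> {1..m}. p i n \<omega> \<le> x})"

definition ratio_deviation :: "nat \<Rightarrow> 'a set" where
  "ratio_deviation m = {\<omega>\<in>space M. c / 2 < \<bar>card_S m \<omega> / real m - c\<bar>}"

definition count_deviation :: "nat \<Rightarrow> nat \<Rightarrow> real \<Rightarrow> real \<Rightarrow> 'a set" where
  "count_deviation n m x \<eta> = {\<omega>\<in>space M. \<eta> * real m \<le> \<bar>count_le n m x \<omega> - PS n x * card_S m \<omega>\<bar>}"

definition q :: "nat \<Rightarrow> nat \<Rightarrow> 'a \<Rightarrow> real" where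
  "q n m \<omega> = q_stat \<alpha> m (\<lambda>i. p i n \<omega>) (S \<omega> \<inter> {1..m})"

lemma PS1_mono: "x \<in> {0..1} \<Longrightarrow> y \<in> {0..1} \<Longrightarrow> x \<le> y \<Longrightarrow> PS1 n x \<le> PS1 n y"
  using PS1_df(1)[of n] unfolding dist_fun_01_def by (meson mono_onD)

lemma PS1_le_one: "x \<in> {0..1} \<Longrightarrow> PS1 n x \<le> 1"
  using PS1_mono[of x 1 n] PS1_df(1)[of n] by (auto simp: dist_fun_01_def)

lemma PS_range: "x \<in> {0..1} \<Longrightarrow> PS n x \<in> {0..1}"
  using PS1_df(2)[of x n] PS1_le_one[of x n] gamma_S
  by (auto simp: PS_def convex_bound_le intro: add_nonneg_nonneg)

lemma selection_model: "selection_model M (\<lambda>i. p i n) S (PS n)"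
proof unfold_locales
  fix I :: "nat set" and x :: "nat \<Rightarrow> real" assume "finite I" "I \<subseteq> {1..}" "\<forall>i\<in>I. x i \<in> {0..1}"
  then show "prob {\<omega> \<in> space M. I \<subseteq> S \<omega> \<and> (\<forall>i\<in>I. p i n \<omega> \<le> x i)}
      = prob {\<omega> \<in> space M. I \<subseteq> S \<omega>} * (\<Prod>i\<in>I. PS n (x i))"
    unfolding PS_def by (rule law_on_S)
next
  show "PS n 1 = 1" using PS1_df(1)[of n] by (simp add: PS_def dist_fun_01_def)
qed (use p_rv p_range S_meas PS_range in auto)

lemma count_deviation_sets: "x \<in> {0..1} \<Longrightarrow> 0 < \<eta> \<Longrightarrow> 1 \<le> m \<Longrightarrow> count_deviation n m x \<eta> \<in> events"
  unfolding count_deviation_def count_le_def card_S_def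
  by (rule selection_model.count_deviation_bound(1)[OF selection_model])

lemma prob_count_deviation:
  "x \<in> {0..1} \<Longrightarrow> 0 < \<eta> \<Longrightarrow> 1 \<le> m \<Longrightarrow> prob (count_deviation n m x \<eta>) \<le> 1 / (\<eta>\<^sup>2 * real m)"
  unfolding count_deviation_def count_le_def card_S_def
  by (rule selection_model.count_deviation_bound(2)[OF selection_model])

lemma count_deviation_antimono: "\<eta>' \<le> \<eta> \<Longrightarrow> count_deviation n m x \<eta> \<subseteq> count_deviation n m x \<eta>'"
  unfolding count_deviation_def by (auto intro: order_trans[OF mult_right_mono])

lemma ratio_deviation_sets: "ratio_deviation m \<in> events"
proof -
  have [measurable]: "card_S m \<in> borel_measurable M"
    unfolding card_S_def[abs_def] by (rule selection_model.card_selected_measurable[OF selection_model])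
  show ?thesis unfolding ratio_deviation_def by measurable
qed

lemma prob_ratio_deviation: "(\<lambda>m. prob (ratio_deviation m)) \<longlonglongrightarrow> 0"
  using S_ratio[of "c/2"] c_pos by (simp add: ratio_deviation_def card_S_def)

lemma card_S_le: "card_S m \<omega> \<le> real m"
  using card_mono[of "{1..m}" "S \<omega> \<inter> {1..m}"] by (simp add: card_S_def)

lemma card_S_ge:
  assumes "\<omega> \<in> space M" "\<omega> \<notin> ratio_deviation m" "1 \<le> m"
  shows "c * real m / 2 \<le> card_S m \<omega>"
proof -
  have "\<bar>card_S m \<omega> / real m - c\<bar> \<le> c / 2" using assms(1,2) by (auto simp: ratio_deviation_def)
  then have "c / 2 \<le> card_S m \<omega> / real m" by linarith
  then show ?thesis using assms(3) by (simp add: pos_le_divide_eq)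
qed

lemma q_eq:
  assumes "0 < card_S m \<omega>"
  shows "q n m \<omega> = real (t_stat \<alpha> m (\<lambda>i. p i n \<omega>) (S \<omega> \<inter> {1..m})) / card_S m \<omega>"
  using assms by (auto simp: q_def q_stat_def card_S_def)

lemma eventually_PS1_close:
  assumes "x \<in> {0<..1}" "0 < \<theta>"
  obtains n0 where "\<And>n. n0 \<le> n \<Longrightarrow> 1 - \<theta> < PS1 n x"
proof -
  have "\<forall>\<^sub>F n in sequentially. dist (PS1 n x) 1 < \<theta>" using lim_PS1[OF assms(1)] assms(2) by (rule tendstoD)
  then obtain n0 where n0: "\<And>n. n0 \<le> n \<Longrightarrow> \<bar>PS1 n x - 1\<bar> < \<theta>"
    by (auto simp: eventually_sequentially dist_real_def)
  show ?thesis
  proof (rule that)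
    show "1 - \<theta> < PS1 n x" if "n0 \<le> n" for n using n0[OF that] by linarith
  qed
qed

lemma q_upper_off_deviations:
  assumes \<epsilon>: "0 < \<epsilon>"
  obtains x \<eta> n0 where "x \<in> {0..1}" "0 < \<eta>"
    "\<And>n m \<omega>. n0 \<le> n \<Longrightarrow> 1 \<le> m \<Longrightarrow> \<omega> \<in> space M \<Longrightarrow> \<omega> \<notin> ratio_deviation m \<Longrightarrow>
      \<omega> \<notin> count_deviation n m x \<eta> \<Longrightarrow> q n m \<omega> \<le> \<gamma>S + \<epsilon>"
proof -
  define \<kappa> where "\<kappa> = \<epsilon> * c / 4"
  define x where "x = min 1 (\<kappa> * \<alpha>)"
  define \<eta> where "\<eta> = \<epsilon> * c / 8"
  have \<kappa>: "0 < \<kappa>" and \<eta>: "0 < \<eta>" using \<epsilon> c_pos by (simp_all add: \<kappa>_def \<eta>_def)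
  have x: "x \<in> {0<..1}" using \<kappa> alpha by (simp add: x_def)
  obtain n0 where n0: "\<And>n. n0 \<le> n \<Longrightarrow> 1 - \<eta> < PS1 n x" using eventually_PS1_close[OF x \<eta>] by blast
  show thesis
  proof (rule that)
    show "x \<in> {0..1}" "0 < \<eta>" using x \<eta> by auto
    fix n m \<omega> assume n: "n0 \<le> n" and m: "1 \<le> m" and \<omega>: "\<omega> \<in> space M"
      and ratio: "\<omega> \<notin> ratio_deviation m" and count: "\<omega> \<notin> count_deviation n m x \<eta>"
    let ?A = "S \<omega> \<inter> {1..m}" and ?K = "card_S m \<omega>"
    have K: "c * real m / 2 \<le> ?K" "?K \<le> real m" using card_S_ge[OF \<omega> ratio m] card_S_le by auto
    moreover have "0 < c * real m / 2" using c_pos m by simp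
    ultimately have K_pos: "0 < ?K" by linarith
    have "1 - \<gamma>S - \<eta> \<le> PS n x"
    proof -
      have "(1 - \<gamma>S) * (1 - \<eta>) \<le> (1 - \<gamma>S) * PS1 n x" using n0[OF n] gamma_S by (intro mult_left_mono) auto
      moreover have "1 - \<gamma>S - \<eta> \<le> (1 - \<gamma>S) * (1 - \<eta>)"
        using gamma_S \<eta> by (simp add: algebra_simps)
      moreover have "0 \<le> \<gamma>S * x" using gamma_S x by simp
      ultimately show ?thesis unfolding PS_def by linarith
    qed
    then have "(1 - PS n x) * ?K \<le> (\<gamma>S + \<eta>) * ?K" using K_pos by (intro mult_right_mono) auto
    moreover have "PS n x * ?K - \<eta> * real m < count_le n m x \<omega>"
      using count \<omega> by (auto simp: count_deviation_def abs_less_iff)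
    moreover have "\<eta> * ?K \<le> \<eta> * real m" "\<epsilon> * (c * real m / 2) \<le> \<epsilon> * ?K"
      using K \<eta> \<epsilon> by (auto intro: mult_left_mono)
    ultimately have "?K - count_le n m x \<omega> + \<kappa> * real m \<le> (\<gamma>S + \<epsilon>) * ?K"
      unfolding \<kappa>_def \<eta>_def by (simp add: algebra_simps)
    moreover have "real (card {i\<in>?A. x < p i n \<omega>}) = ?K - count_le n m x \<omega>"
      using card_filter_not[of ?A "\<lambda>i. p i n \<omega> \<le> x"] by (simp add: card_S_def count_le_def not_le)
    ultimately have "real (t_stat \<alpha> m (\<lambda>i. p i n \<omega>) ?A) \<le> (\<gamma>S + \<epsilon>) * ?K"
      using x alpha \<kappa> by (intro t_stat_le_of_few_large[where \<kappa> = \<kappa> and x = x]) (auto simp: x_def)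
    then show "q n m \<omega> \<le> \<gamma>S + \<epsilon>" using K_pos by (simp add: q_eq divide_le_eq)
  qed
qed

lemma PS_increment_le:
  assumes "x \<in> {0..1}" "y \<in> {0..1}" "x \<le> y"
  shows "PS n y - PS n x \<le> \<gamma>S * (y - x) + (1 - PS1 n x)"
proof -
  have "\<gamma>S * PS1 n x \<le> \<gamma>S * PS1 n y" using PS1_mono[OF assms] gamma_S by (intro mult_left_mono)
  moreover have "PS n y - PS n x = \<gamma>S * (y - x) + PS1 n y - PS1 n x - \<gamma>S * PS1 n y + \<gamma>S * PS1 n x"
    by (simp add: PS_def algebra_simps)
  ultimately show ?thesis using PS1_le_one[OF assms(2), of n] by linarith
qed

lemma PS_tail:
  assumes "x \<in> {0..1}"
  shows "\<gamma>S * (1 - x) \<le> 1 - PS n x"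
proof -
  have "(1 - \<gamma>S) * PS1 n x \<le> 1 - \<gamma>S"
    using PS1_le_one[OF assms] gamma_S mult_left_mono[of "PS1 n x" 1 "1 - \<gamma>S"] by simp
  then show ?thesis by (simp add: PS_def algebra_simps)
qed

lemma q_nonneg: "0 \<le> q n m \<omega>"
  by (simp add: q_def q_stat_def)

lemma q_lower_off_deviations:
  assumes \<epsilon>: "0 < \<epsilon>"
  obtains Gr \<eta> n0 where "finite Gr" "Gr \<subseteq> {0..1}" "0 < \<eta>"
    "\<And>n m \<omega>. n0 \<le> n \<Longrightarrow> 1 \<le> m \<Longrightarrow> \<omega> \<in> space M \<Longrightarrow> \<omega> \<notin> ratio_deviation m \<Longrightarrow>
      (\<forall>g\<in>Gr. \<omega> \<notin> count_deviation n m g \<eta>) \<Longrightarrow> \<gamma>S - \<epsilon> \<le> q n m \<omega>"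
proof (cases "\<gamma>S = 0")
  case True
  then show thesis using \<epsilon> by (intro that[of "{}" 1 0]) (auto intro: order_trans[OF _ q_nonneg])
next
  case False
  then have \<gamma>: "0 < \<gamma>S" using gamma_S by simp
  define \<delta> where "\<delta> = min (1 - \<alpha>) (\<epsilon> / 2)"
  have \<delta>: "0 < \<delta>" "\<delta> \<le> 1 - \<alpha>" "\<delta> \<le> \<epsilon> / 2" using alpha \<epsilon> unfolding \<delta>_def by linarith+
  obtain Gr where Gr: "finite Gr" "Gr \<subseteq> {0..1}" "\<delta> \<in> Gr"
    and dense: "\<And>y. \<delta> \<le> y \<Longrightarrow> y \<le> 1 - \<delta>/2 \<Longrightarrow> \<exists>g\<in>Gr. y \<le> g \<and> g \<le> y + \<delta>/2"
    using half_step_grid_exists[of \<delta>] \<delta> alpha by auto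
  define \<eta> where "\<eta> = \<gamma>S * \<delta> * c / 16"
  have \<eta>: "0 < \<eta>" using \<gamma> \<delta> c_pos by (simp add: \<eta>_def)
  obtain n0 where n0: "\<And>n. n0 \<le> n \<Longrightarrow> 1 - \<gamma>S * \<delta> / 8 < PS1 n \<delta>"
    using eventually_PS1_close[of \<delta> "\<gamma>S * \<delta> / 8"] \<gamma> \<delta> alpha by auto
  show thesis
  proof (rule that[OF Gr(1,2) \<eta>])
    fix n m \<omega> assume n: "n0 \<le> n" and m: "1 \<le> m" and \<omega>: "\<omega> \<in> space M"
      and ratio: "\<omega> \<notin> ratio_deviation m" and count: "\<forall>g\<in>Gr. \<omega> \<notin> count_deviation n m g \<eta>"
    let ?A = "S \<omega> \<inter> {1..m}" and ?K = "card_S m \<omega>"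
    have K: "c * real m / 2 \<le> ?K" using card_S_ge[OF \<omega> ratio m] .
    moreover have "0 < c * real m / 2" using c_pos m by simp
    ultimately have K_pos: "0 < ?K" by linarith
    have \<eta>m: "\<eta> * real m \<le> \<gamma>S * \<delta> * ?K / 8"
      using mult_left_mono[OF K, of "\<gamma>S * \<delta> / 8"] \<gamma> \<delta> by (simp add: \<eta>_def algebra_simps)
    have "\<gamma>S * (1 - \<delta>) * real (card ?A) - \<eta> * real m < real (t_stat \<alpha> m (\<lambda>i. p i n \<omega>) ?A)"
    proof (rule t_stat_gt_of_tracking[where F = "PS n" and Gr = Gr])
      show "\<bar>real (card {i\<in>?A. p i n \<omega> \<le> g}) - PS n g * real (card ?A)\<bar> < \<eta> * real m"
        if "g \<in> Gr" for g
        using count that \<omega> by (auto simp: count_deviation_def count_le_def card_S_def not_le)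
      show "PS n g - PS n \<delta> \<le> \<gamma>S * (g - \<delta>) + \<gamma>S * \<delta> / 8" if "g \<in> Gr" "\<delta> \<le> g" for g
        using PS_increment_le[of \<delta> g n] n0[OF n] that Gr \<delta> alpha by auto
      show "\<gamma>S * (1 - \<delta>) \<le> 1 - PS n \<delta>" using PS_tail \<delta> alpha by simp
    qed (use \<delta> Gr(3) dense alpha gamma_S \<eta>m in \<open>auto simp: card_S_def\<close>)
    then have "\<gamma>S * (1 - \<delta>) * ?K - \<eta> * real m < real (t_stat \<alpha> m (\<lambda>i. p i n \<omega>) ?A)"
      by (simp add: card_S_def)
    moreover have "(\<gamma>S - \<epsilon>) * ?K \<le> \<gamma>S * (1 - \<delta>) * ?K - \<gamma>S * \<delta> * ?K / 8"
    proof -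
      have "\<gamma>S * \<delta> \<le> \<delta>" using \<delta> gamma_S by (intro mult_left_le_one_le) auto
      then have "\<gamma>S * \<delta> + \<gamma>S * \<delta> / 8 \<le> \<epsilon>" using \<delta> by linarith
      then show ?thesis using K_pos mult_right_mono[of "\<gamma>S * \<delta> + \<gamma>S * \<delta> / 8" \<epsilon> ?K]
        by (simp add: algebra_simps)
    qed
    ultimately have "(\<gamma>S - \<epsilon>) * ?K \<le> real (t_stat \<alpha> m (\<lambda>i. p i n \<omega>) ?A)" using \<eta>m by linarith
    then show "\<gamma>S - \<epsilon> \<le> q n m \<omega>" using K_pos by (simp add: q_eq le_divide_eq)
  qed
qed

lemma q_close_off_deviations:
  assumes \<epsilon>: "0 < \<epsilon>"
  obtains Gr \<eta> n0 where "finite Gr" "Gr \<subseteq> {0..1}" "0 < \<eta>"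
    "\<And>n m \<omega>. n0 \<le> n \<Longrightarrow> 1 \<le> m \<Longrightarrow> \<omega> \<in> space M \<Longrightarrow> \<omega> \<notin> ratio_deviation m \<Longrightarrow>
      (\<forall>g\<in>Gr. \<omega> \<notin> count_deviation n m g \<eta>) \<Longrightarrow> \<bar>q n m \<omega> - \<gamma>S\<bar> \<le> \<epsilon>"
proof -
  obtain x \<eta>\<^sub>u n\<^sub>u where upper: "x \<in> {0..1}" "0 < \<eta>\<^sub>u"
    "\<And>n m \<omega>. n\<^sub>u \<le> n \<Longrightarrow> 1 \<le> m \<Longrightarrow> \<omega> \<in> space M \<Longrightarrow> \<omega> \<notin> ratio_deviation m \<Longrightarrow>
      \<omega> \<notin> count_deviation n m x \<eta>\<^sub>u \<Longrightarrow> q n m \<omega> \<le> \<gamma>S + \<epsilon>"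
    using q_upper_off_deviations[OF \<epsilon>] by blast
  obtain Gr \<eta>\<^sub>l n\<^sub>l where lower: "finite Gr" "Gr \<subseteq> {0..1}" "0 < \<eta>\<^sub>l"
    "\<And>n m \<omega>. n\<^sub>l \<le> n \<Longrightarrow> 1 \<le> m \<Longrightarrow> \<omega> \<in> space M \<Longrightarrow> \<omega> \<notin> ratio_deviation m \<Longrightarrow>
      (\<forall>g\<in>Gr. \<omega> \<notin> count_deviation n m g \<eta>\<^sub>l) \<Longrightarrow> \<gamma>S - \<epsilon> \<le> q n m \<omega>"
    using q_lower_off_deviations[OF \<epsilon>] by blast
  show thesis
  proof (rule that[of "insert x Gr" "min \<eta>\<^sub>u \<eta>\<^sub>l" "max n\<^sub>u n\<^sub>l"])
    fix n m \<omega> assume n: "max n\<^sub>u n\<^sub>l \<le> n" and m: "1 \<le> m" and \<omega>: "\<omega> \<in> space M"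
      and ratio: "\<omega> \<notin> ratio_deviation m"
      and good: "\<forall>g\<in>insert x Gr. \<omega> \<notin> count_deviation n m g (min \<eta>\<^sub>u \<eta>\<^sub>l)"
    have "\<omega> \<notin> count_deviation n m x \<eta>\<^sub>u"
      using good count_deviation_antimono[of "min \<eta>\<^sub>u \<eta>\<^sub>l" \<eta>\<^sub>u n m x] by auto
    then have "q n m \<omega> \<le> \<gamma>S + \<epsilon>" using upper(3) n m \<omega> ratio by simp
    moreover have "\<forall>g\<in>Gr. \<omega> \<notin> count_deviation n m g \<eta>\<^sub>l"
      using good count_deviation_antimono[of "min \<eta>\<^sub>u \<eta>\<^sub>l" \<eta>\<^sub>l n m] by auto
    then have "\<gamma>S - \<epsilon> \<le> q n m \<omega>" using lower(4) n m \<omega> ratio by simp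
    ultimately show "\<bar>q n m \<omega> - \<gamma>S\<bar> \<le> \<epsilon>" by (simp add: abs_le_iff)
  qed (use upper lower in auto)
qed

lemma prob_q_far_le:
  assumes Gr: "finite Gr" "Gr \<subseteq> {0..1}" and \<eta>: "0 < \<eta>" and m: "1 \<le> m"
    and close: "\<And>\<omega>. \<omega> \<in> space M \<Longrightarrow> \<omega> \<notin> ratio_deviation m \<Longrightarrow>
      (\<forall>g\<in>Gr. \<omega> \<notin> count_deviation n m g \<eta>) \<Longrightarrow> \<bar>q n m \<omega> - \<gamma>S\<bar> \<le> \<epsilon>"
  shows "prob {\<omega>\<in>space M. \<epsilon> < \<bar>q n m \<omega> - \<gamma>S\<bar>}
    \<le> prob (ratio_deviation m) + real (card Gr) / (\<eta>\<^sup>2 * real m)"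
proof -
  let ?U = "\<Union>g\<in>Gr. count_deviation n m g \<eta>"
  have sets: "ratio_deviation m \<in> events" "\<And>g. g \<in> Gr \<Longrightarrow> count_deviation n m g \<eta> \<in> events"
    using ratio_deviation_sets count_deviation_sets Gr \<eta> m by auto
  have "{\<omega>\<in>space M. \<epsilon> < \<bar>q n m \<omega> - \<gamma>S\<bar>} \<subseteq> ratio_deviation m \<union> ?U"
  proof (intro subsetI)
    fix \<omega> assume \<omega>: "\<omega> \<in> {\<omega>\<in>space M. \<epsilon> < \<bar>q n m \<omega> - \<gamma>S\<bar>}"
    show "\<omega> \<in> ratio_deviation m \<union> ?U"
    proof (rule ccontr)
      assume "\<omega> \<notin> ratio_deviation m \<union> ?U"
      then have "\<bar>q n m \<omega> - \<gamma>S\<bar> \<le> \<epsilon>" using \<omega> close by blast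
      then show False using \<omega> by simp
    qed
  qed
  then have "prob {\<omega>\<in>space M. \<epsilon> < \<bar>q n m \<omega> - \<gamma>S\<bar>} \<le> prob (ratio_deviation m \<union> ?U)"
    using sets Gr(1) by (intro finite_measure_mono) auto
  also have "\<dots> \<le> prob (ratio_deviation m) + prob ?U"
    using sets Gr(1) by (intro measure_Un_le) auto
  also have "prob ?U \<le> (\<Sum>g\<in>Gr. prob (count_deviation n m g \<eta>))"
    using sets Gr(1) by (intro measure_UNION_le) auto
  also have "\<dots> \<le> (\<Sum>g\<in>Gr. 1 / (\<eta>\<^sup>2 * real m))"
    using Gr \<eta> m by (intro sum_mono prob_count_deviation) auto
  finally show ?thesis by simp
qed

lemma q_tendsto:
  assumes \<epsilon>: "0 < \<epsilon>"
  shows "((\<lambda>(m, n). prob {\<omega>\<in>space M. \<epsilon> < \<bar>q n m \<omega> - \<gamma>S\<bar>}) \<longlongrightarrow> 0) (sequentially \<times>\<^sub>F sequentially)"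
proof -
  obtain Gr \<eta> n0 where Gr: "finite Gr" "Gr \<subseteq> {0..1}" and \<eta>: "0 < \<eta>"
    and close: "\<And>n m \<omega>. n0 \<le> n \<Longrightarrow> 1 \<le> m \<Longrightarrow> \<omega> \<in> space M \<Longrightarrow> \<omega> \<notin> ratio_deviation m \<Longrightarrow>
      (\<forall>g\<in>Gr. \<omega> \<notin> count_deviation n m g \<eta>) \<Longrightarrow> \<bar>q n m \<omega> - \<gamma>S\<bar> \<le> \<epsilon>"
    using q_close_off_deviations[OF \<epsilon>] by blast
  define bound where "bound m = prob (ratio_deviation m) + real (card Gr) / (\<eta>\<^sup>2 * real m)" for m
  have "bound \<longlonglongrightarrow> 0"
    unfolding bound_def divide_divide_eq_left[symmetric]
    using prob_ratio_deviation by (intro tendsto_add_zero lim_const_over_n)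
  then have lim: "((\<lambda>mn. bound (fst mn)) \<longlongrightarrow> 0) (sequentially \<times>\<^sub>F sequentially)"
    by (rule filterlim_compose[OF _ filterlim_fst])
  have bound: "prob {\<omega>\<in>space M. \<epsilon> < \<bar>q n m \<omega> - \<gamma>S\<bar>} \<le> bound m"
    if "max n0 1 \<le> m" "max n0 1 \<le> n" for m n
    unfolding bound_def using that by (intro prob_q_far_le[OF Gr \<eta>] close) auto
  have le: "\<forall>\<^sub>F mn in sequentially \<times>\<^sub>F sequentially.
      (\<lambda>(m, n). prob {\<omega>\<in>space M. \<epsilon> < \<bar>q n m \<omega> - \<gamma>S\<bar>}) mn \<le> bound (fst mn)"
    unfolding eventually_prod_sequentially
  proof (intro exI allI impI)
    fix m n assume "max n0 1 \<le> m" "max n0 1 \<le> n"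
    then show "(\<lambda>(m, n). prob {\<omega>\<in>space M. \<epsilon> < \<bar>q n m \<omega> - \<gamma>S\<bar>}) (n, m) \<le> bound (fst (n, m))"
      using bound[of n m] by simp
  qed
  have nonneg: "\<forall>\<^sub>F mn in sequentially \<times>\<^sub>F sequentially.
      0 \<le> (\<lambda>(m, n). prob {\<omega>\<in>space M. \<epsilon> < \<bar>q n m \<omega> - \<gamma>S\<bar>}) mn"
    by (simp add: case_prod_beta)
  show ?thesis by (rule tendsto_sandwich[OF nonneg le tendsto_const lim])
qed

end

theorem theorem3:
  fixes M :: "'a measure"
    and p :: "nat \<Rightarrow> nat \<Rightarrow> 'a \<Rightarrow> real"   \<comment> \<open>p i n \<omega> = p_{i,n}\<close>
    and S :: "'a \<Rightarrow> nat set"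
    and \<gamma> \<gamma>S \<alpha> c :: real
    and P1 PS1 :: "nat \<Rightarrow> real \<Rightarrow> real"        \<comment> \<open>P1 n = P_{1,n}, PS1 n = P^S_{1,n}\<close>
  assumes M: "prob_space M"
    and alpha: "0 < \<alpha>" "\<alpha> < 1"
    and gamma: "0 \<le> \<gamma>" "\<gamma> \<le> 1" "0 \<le> \<gamma>S" "\<gamma>S \<le> 1"
    and P1_df: "\<And>n. dist_fun_01 (P1 n)" "\<And>n x. x \<in> {0..1} \<Longrightarrow> P1 n x \<ge> x"
    and PS1_df: "\<And>n. dist_fun_01 (PS1 n)" "\<And>n x. x \<in> {0..1} \<Longrightarrow> PS1 n x \<ge> x"
    and p_rv: "\<And>i n. 1 \<le> i \<Longrightarrow> p i n \<in> borel_measurable M"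
    and p_range: "\<And>i n \<omega>. 1 \<le> i \<Longrightarrow> \<omega> \<in> space M \<Longrightarrow> p i n \<omega> \<in> {0..1}"
    and S_meas: "\<And>i. {\<omega> \<in> space M. i \<in> S \<omega>} \<in> sets M"
    and S_inf: "\<And>\<omega>. \<omega> \<in> space M \<Longrightarrow> infinite (S \<omega>)"
    and p_indep: "\<And>n. prob_space.indep_vars M (\<lambda>_. borel) (\<lambda>i. p i n) {1..}"
    and p_marg: "\<And>i n x. 1 \<le> i \<Longrightarrow> x \<in> {0..1} \<Longrightarrow>
        measure M {\<omega> \<in> space M. p i n \<omega> \<le> x} = \<gamma> * x + (1 - \<gamma>) * P1 n x"
    and p_condS: "\<And>n I x. finite I \<Longrightarrow> I \<subseteq> {1..} \<Longrightarrow> (\<forall>i\<in>I. x i \<in> {0..1}) \<Longrightarrow>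
        measure M {\<omega> \<in> space M. I \<subseteq> S \<omega> \<and> (\<forall>i\<in>I. p i n \<omega> \<le> x i)}
        = measure M {\<omega> \<in> space M. I \<subseteq> S \<omega>} * (\<Prod>i\<in>I. \<gamma>S * x i + (1 - \<gamma>S) * PS1 n (x i))"
    and lim_PS1: "\<And>x. x \<in> {0<..1} \<Longrightarrow> (\<lambda>n. PS1 n x) \<longlonglongrightarrow> 1"
    and lim_P1: "\<And>x. x \<in> {0<..1} \<Longrightarrow> (\<lambda>n. P1 n x) \<longlonglongrightarrow> 1"
    and mono_P1: "\<And>x. x \<in> {0..1} \<Longrightarrow> incseq (\<lambda>n. P1 n x)"
    and c_pos: "0 < c"
    and S_ratio: "\<And>\<epsilon>. 0 < \<epsilon> \<Longrightarrow>
        (\<lambda>m. measure M {\<omega> \<in> space M.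
            \<bar>real (card (S \<omega> \<inter> {1..m})) / real m - c\<bar> > \<epsilon>}) \<longlonglongrightarrow> 0"
  shows "\<forall>\<epsilon>>0. ((\<lambda>(m, n). measure M {\<omega> \<in> space M.
            \<bar>q_stat \<alpha> m (\<lambda>i. p i n \<omega>) (S \<omega> \<inter> {1..m}) - \<gamma>S\<bar> > \<epsilon>}) \<longlongrightarrow> 0)
          (sequentially \<times>\<^sub>F sequentially)"
proof -
  interpret selection_asymptotics M p S \<gamma>S \<alpha> c PS1
    by (rule selection_asymptotics.intro[OF M], unfold_locales)
      (use alpha gamma PS1_df p_rv p_range S_meas p_condS lim_PS1 c_pos S_ratio in auto)
  show ?thesis using q_tendsto by (simp add: q_def)
qed

end
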